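(* Fix a constant $c\ge1$. There is a constant $c''>0$ depending only on $c$ such that for all integers $n\ge3$, $U\ge3$ with $n/c\le U\le cn$, and all states $a,b$: if the modified chain $(X_t)$ is started at $X_1=a$, then the probability of the event $T(a,b)$ that $X_{4n}=b$ and no major self-loop is taken at any of the states $1,1',n,n'$ during the transitions at times $1,\dots,4n-1$ satisfies $$\mathbb{P}(T(a,b))\ge\frac{1}{c''n}.$$
   Context: Let $n\ge3$, $U\ge3$ be integers. The "modified chain" is a Markov chain on the $2n$ states $\{1,\dots,n,1',\dots,n'\}$ whose transitions are labeled edges (a multigraph). Every state has exactly three outgoing edges: a "major self-loop" with probability $1/2$, a "continuing link" with probability $\frac12(1-\frac1U)$, and a "switching link" with probability $\frac1{2U}$. Continuing links: $i\to i+1$ for $1\le i\le n-1$, $n\to n'$, $i'\to(i-1)'$ for $2\le i\le n$, $1'\to1$. Switching links: $i\to(i+1)'$ for $1\le i\le n-1$, $n\to n$, $i'\to i-1$ for $2\le i\le n$, $1'\to1'$ (at $n$ and $1'$ the switching link is a self-loop distinct from the major self-loop). *)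

theory Defs
  imports Complex_Main
begin

text \<open>States of the modified chain: (i, False) is state i, (i, True) is state i',
  for 1 \<le> i \<le> n.\<close>
type_synonym state = "nat \<times> bool"

definition states :: "nat \<Rightarrow> state set" where
  "states n = {s. 1 \<le> fst s \<and> fst s \<le> n}"

text \<open>Edge labels: 0 = major self-loop, 1 = continuing link, 2 = switching link.\<close>
definition nxt :: "nat \<Rightarrow> state \<Rightarrow> nat \<Rightarrow> state" where
  "nxt n s l = (let (i, p) = s in
     if l = 0 then s
     else if l = 1 then
       (if \<not> p then (if i < n then (i + 1, False) else (n, True))
        else (if 2 \<le> i then (i - 1, True) else (1, False)))
     else
       (if \<not> p then (if i < n then (i + 1, True) else (n, False))
        else (if 2 \<le> i then (i - 1, False) else (1, True))))"

definition edge_prob :: "nat \<Rightarrow> nat \<Rightarrow> real" where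
  "edge_prob U l = (if l = 0 then 1/2
                    else if l = 1 then (1 - 1 / real U) / 2
                    else 1 / (2 * real U))"

fun path :: "nat \<Rightarrow> state \<Rightarrow> nat list \<Rightarrow> state list" where
  "path n s [] = [s]"
| "path n s (l # ls) = s # path n (nxt n s l) ls"

definition special :: "nat \<Rightarrow> state \<Rightarrow> bool" where
  "special n s \<longleftrightarrow> s \<in> {(1, False), (1, True), (n, False), (n, True)}"

text \<open>Label sequences for the 4n-1 transitions at times 1..4n-1 realising T(a,b):
  X_1 = a, X_{4n} = b, and no major self-loop at 1,1',n,n'.\<close>
definition T_event :: "nat \<Rightarrow> state \<Rightarrow> state \<Rightarrow> nat list set" where
  "T_event n a b = {ls. length ls = 4 * n - 1 \<and> set ls \<subseteq> {0, 1, 2}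
      \<and> last (path n a ls) = b
      \<and> (\<forall>k < length ls. ls ! k = 0 \<longrightarrow> \<not> special n (path n a ls ! k))}"

definition prob_T :: "nat \<Rightarrow> nat \<Rightarrow> state \<Rightarrow> state \<Rightarrow> real" where
  "prob_T n U a b = (\<Sum>ls\<in>T_event n a b. \<Prod>l\<leftarrow>ls. edge_prob U l)"

end

theory Submission
  imports Defs
begin

(* Put the 2n states on a cycle of length 2n (position pos): continuing links
   step forward along the cycle and switching links reflect the position.  For a target b
   we use label skeletons with a single switching link, placed so that the skeleton of
   length K = 4n-1-Z leads from a to b; such a skeleton exists whenever Z has the right
   parity.  The remaining Z transitions are major self-loops, inserted at non-special states.
   A skeleton visits special states at most 12 times, so the loops can be distributed over
   about K slots, giving roughly binom(4n-13, Z) insertions of weight 2^-(4n-1) (1-1/U)^(4n-1)/U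
   each.  Summing over Z <= 2n-6 of the right parity recovers a quarter of 2^(4n-13), whence
   P(T(a,b)) >= 2^-14 (1-1/U)^(4n-1)/U >= exp(-8c) 2^-14 / (c n). *)

lemma nxt_major_loop [simp]: "nxt n s 0 = s"
  by (cases s) (simp add: nxt_def)

lemma length_path [simp]: "length (path n s ls) = Suc (length ls)"
  by (induction ls arbitrary: s) auto

lemma path_ne [simp]: "path n s ls \<noteq> []"
  by (cases ls) auto

lemma last_path_append: "last (path n s (xs @ ys)) = last (path n (last (path n s xs)) ys)"
  by (induction xs arbitrary: s) auto

lemma last_path_without_loops: "last (path n s ls) = last (path n s (filter (\<lambda>l. l \<noteq> 0) ls))"
  by (induction ls arbitrary: s) auto

lemma nxt_states: "s \<in> states n \<Longrightarrow> nxt n s l \<in> states n"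
  by (cases s) (auto simp: states_def nxt_def Let_def)

lemma last_path_states: "s \<in> states n \<Longrightarrow> last (path n s ls) \<in> states n"
  by (induction ls arbitrary: s) (simp_all add: nxt_states)

abbreviation path_weight :: "nat \<Rightarrow> nat list \<Rightarrow> real" where
  "path_weight U ls \<equiv> \<Prod>l\<leftarrow>ls. edge_prob U l"

lemma edge_prob_loop: "edge_prob U 0 = 1/2"
  by (simp add: edge_prob_def)

lemma edge_prob_nonneg: "U \<ge> 1 \<Longrightarrow> edge_prob U l \<ge> 0"
  by (simp add: edge_prob_def)

lemma path_weight_nonneg: "U \<ge> 1 \<Longrightarrow> path_weight U ls \<ge> 0"
  by (induction ls) (auto simp: edge_prob_nonneg)

definition loop_ext :: "nat \<Rightarrow> state \<Rightarrow> nat \<Rightarrow> nat list \<Rightarrow> nat list set" where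
  "loop_ext n s L M = {ls. length ls = L \<and> set ls \<subseteq> {0,1,2} \<and> filter (\<lambda>l. l \<noteq> 0) ls = M
      \<and> (\<forall>k<length ls. ls ! k = 0 \<longrightarrow> \<not> special n (path n s ls ! k))}"

definition ext_weight :: "nat \<Rightarrow> nat \<Rightarrow> state \<Rightarrow> nat \<Rightarrow> nat list \<Rightarrow> real" where
  "ext_weight n U s L M = (\<Sum>ls\<in>loop_ext n s L M. path_weight U ls)"

definition free_slots :: "nat \<Rightarrow> state \<Rightarrow> nat list \<Rightarrow> nat" where
  "free_slots n s M = length (filter (\<lambda>x. \<not> special n x) (path n s M))"

(* The number of ways to distribute Z indistinguishable loops over q slots.
   For q = 0 this is correctly 1 if Z = 0 and 0 otherwise. *)
definition placements :: "nat \<Rightarrow> nat \<Rightarrow> nat" where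
  "placements q Z = (Z + q - 1) choose Z"

lemma free_slots_Nil: "free_slots n s [] = (if special n s then 0 else 1)"
  by (simp add: free_slots_def)

lemma free_slots_Cons:
  "free_slots n s (l # M) = (if special n s then 0 else 1) + free_slots n (nxt n s l) M"
  by (simp add: free_slots_def)

lemma placements_no_loops [simp]: "placements q 0 = 1"
  by (simp add: placements_def)

lemma placements_no_slots: "placements 0 (Suc Z) = 0"
  by (simp add: placements_def)

lemma placements_one_slot: "placements (Suc 0) Z = 1"
  by (simp add: placements_def)

(* Pascal's rule for placements: either the first slot receives one more loop, or it is
   closed and the loops go to the remaining slots. *)
lemma placements_pascal:
  "placements (Suc q) (Suc Z) = placements (Suc q) Z + placements q (Suc Z)"
  by (cases q) (simp_all add: placements_def)

lemma placements_ge_binomial: "m \<le> Z + q - 1 \<Longrightarrow> m choose Z \<le> placements q Z"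
  unfolding placements_def by (rule binomial_right_mono)

lemma placements_pos: "q \<ge> 1 \<Longrightarrow> placements q Z \<ge> 1"
  unfolding placements_def by (simp add: Suc_leI)

lemma finite_loop_ext: "finite (loop_ext n s L M)"
proof -
  have "loop_ext n s L M \<subseteq> {ls. set ls \<subseteq> {0,1,2} \<and> length ls = L}"
    by (auto simp: loop_ext_def)
  moreover have "finite {ls. set ls \<subseteq> ({0,1,2}::nat set) \<and> length ls = L}"
    by (rule finite_lists_length_eq) simp
  ultimately show ?thesis by (rule finite_subset)
qed

lemma loop_ext_Nil: "[] \<in> loop_ext n s 0 []"
  by (simp add: loop_ext_def)

lemma loop_ext_Cons_loop:
  "ls \<in> loop_ext n s L M \<Longrightarrow> \<not> special n s \<Longrightarrow> 0 # ls \<in> loop_ext n s (Suc L) M"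
  unfolding loop_ext_def by (auto simp: nth_Cons split: nat.splits)

lemma loop_ext_Cons_link:
  "ls \<in> loop_ext n (nxt n s m) L M \<Longrightarrow> m \<in> {1,2} \<Longrightarrow> m # ls \<in> loop_ext n s (Suc L) (m # M)"
  unfolding loop_ext_def by (auto simp: nth_Cons split: nat.splits)

lemma ext_weight_nonneg: "U \<ge> 1 \<Longrightarrow> ext_weight n U s L M \<ge> 0"
  unfolding ext_weight_def by (intro sum_nonneg path_weight_nonneg)

lemma sum_path_weight_Cons:
  "(\<Sum>ls\<in>Cons m ` A. path_weight U ls) = edge_prob U m * (\<Sum>ls\<in>A. path_weight U ls)"
  by (simp add: sum.reindex sum_distrib_left)

lemma ext_weight_ge_subset:
  "U \<ge> 1 \<Longrightarrow> A \<subseteq> loop_ext n s L M \<Longrightarrow> (\<Sum>ls\<in>A. path_weight U ls) \<le> ext_weight n U s L M"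
  unfolding ext_weight_def by (rule sum_mono2[OF finite_loop_ext]) (auto intro: path_weight_nonneg)

lemma ext_weight_step_link:
  assumes U: "U \<ge> 1" and m: "m \<in> {1,2}"
  shows "edge_prob U m * ext_weight n U (nxt n s m) L M \<le> ext_weight n U s (Suc L) (m # M)"
proof -
  have "Cons m ` loop_ext n (nxt n s m) L M \<subseteq> loop_ext n s (Suc L) (m # M)"
    using loop_ext_Cons_link[where s=s, OF _ m] by blast
  from ext_weight_ge_subset[OF U this] show ?thesis
    by (simp add: ext_weight_def sum_path_weight_Cons)
qed

lemma ext_weight_step_loop:
  assumes U: "U \<ge> 1" and s: "\<not> special n s"
  shows "1/2 * ext_weight n U s L M \<le> ext_weight n U s (Suc L) M"
proof -
  have "Cons 0 ` loop_ext n s L M \<subseteq> loop_ext n s (Suc L) M"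
    using loop_ext_Cons_loop[OF _ s] by blast
  from ext_weight_ge_subset[OF U this] show ?thesis
    by (simp add: ext_weight_def sum_path_weight_Cons edge_prob_loop)
qed

lemma ext_weight_step_both:
  assumes U: "U \<ge> 1" and s: "\<not> special n s" and m: "m \<in> {1,2}"
  shows "1/2 * ext_weight n U s L (m # M) + edge_prob U m * ext_weight n U (nxt n s m) L M
           \<le> ext_weight n U s (Suc L) (m # M)"
proof -
  define A where "A = Cons 0 ` loop_ext n s L (m # M)"
  define B where "B = Cons m ` loop_ext n (nxt n s m) L M"
  have "A \<inter> B = {}" using m by (auto simp: A_def B_def)
  then have "(\<Sum>ls\<in>A \<union> B. path_weight U ls) = (\<Sum>ls\<in>A. path_weight U ls) + (\<Sum>ls\<in>B. path_weight U ls)"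
    by (intro sum.union_disjoint) (auto simp: A_def B_def finite_loop_ext)
  moreover have "A \<union> B \<subseteq> loop_ext n s (Suc L) (m # M)"
    using loop_ext_Cons_loop[OF _ s] loop_ext_Cons_link[where s=s, OF _ m] by (auto simp: A_def B_def)
  ultimately have "(\<Sum>ls\<in>A. path_weight U ls) + (\<Sum>ls\<in>B. path_weight U ls)
      \<le> ext_weight n U s (Suc L) (m # M)"
    using ext_weight_ge_subset[OF U] by metis
  then show ?thesis
    by (simp add: A_def B_def ext_weight_def sum_path_weight_Cons edge_prob_loop)
qed

definition insertion_bound :: "nat \<Rightarrow> nat \<Rightarrow> state \<Rightarrow> nat \<Rightarrow> nat list \<Rightarrow> real" where
  "insertion_bound n U s L M =
     path_weight U M * (1/2)^(L - length M) * real (placements (free_slots n s M) (L - length M))"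

lemma insertion_bound_Cons_step:
  assumes U: "U \<ge> 1" and m: "m \<in> {1,2}" and len: "length M \<le> L"
    and IH_link: "insertion_bound n U (nxt n s m) L M \<le> ext_weight n U (nxt n s m) L M"
    and IH_loop: "Suc (length M) \<le> L \<Longrightarrow>
                    insertion_bound n U s L (m # M) \<le> ext_weight n U s L (m # M)"
  shows "insertion_bound n U s (Suc L) (m # M) \<le> ext_weight n U s (Suc L) (m # M)"
proof -
  define t where "t = nxt n s m"
  define Z where "Z = L - length M"
  define q where "q = free_slots n t M"
  have m0: "edge_prob U m \<ge> 0" using U by (rule edge_prob_nonneg)
  have link_term: "insertion_bound n U t L M = path_weight U M * (1/2)^Z * real (placements q Z)"
    by (simp add: insertion_bound_def Z_def q_def)
  have link: "edge_prob U m * insertion_bound n U t L M \<le> ext_weight n U s (Suc L) (m # M)"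
    using mult_left_mono[OF IH_link m0] ext_weight_step_link[OF U m, of n s L M]
    unfolding t_def by linarith
  consider (unchanged) "placements (free_slots n s (m # M)) Z = placements q Z"
    | (pascal) Z0 where "\<not> special n s" "Z = Suc Z0"
    by (cases Z; cases "special n s") (auto simp: free_slots_Cons t_def q_def)
  then show ?thesis
  proof cases
    case unchanged
    then have "insertion_bound n U s (Suc L) (m # M) = edge_prob U m * insertion_bound n U t L M"
      unfolding link_term by (simp add: insertion_bound_def Z_def mult_ac)
    with link show ?thesis by simp
  next
    case pascal
    have slots: "free_slots n s (m # M) = Suc q"
      using pascal(1) by (simp add: free_slots_Cons t_def q_def)
    have "insertion_bound n U s (Suc L) (m # M)
        = 1/2 * insertion_bound n U s L (m # M) + edge_prob U m * insertion_bound n U t L M"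
    proof -
      have "Suc L - length (m # M) = Suc Z0" "L - length (m # M) = Z0"
        using pascal(2) by (auto simp: Z_def)
      then show ?thesis unfolding link_term pascal(2)
        by (simp add: insertion_bound_def slots placements_pascal algebra_simps)
    qed
    also have "\<dots> \<le> 1/2 * ext_weight n U s L (m # M) + edge_prob U m * ext_weight n U t L M"
      using IH_loop IH_link m0 pascal(2) unfolding Z_def t_def
      by (intro add_mono mult_left_mono) auto
    also have "\<dots> \<le> ext_weight n U s (Suc L) (m # M)"
      using ext_weight_step_both[OF U pascal(1) m] unfolding t_def .
    finally show ?thesis .
  qed
qed

lemma loop_insertion_bound:
  assumes U: "U \<ge> 1"
  shows "set M \<subseteq> {1,2} \<Longrightarrow> length M \<le> L \<Longrightarrow> insertion_bound n U s L M \<le> ext_weight n U s L M"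
proof (induction L arbitrary: s M)
  case 0
  have "(\<Sum>ls\<in>{[]}. path_weight U ls) \<le> ext_weight n U s 0 []"
    using loop_ext_Nil by (intro ext_weight_ge_subset[OF U]) auto
  then show ?case using 0 by (simp add: insertion_bound_def)
next
  case (Suc L)
  show ?case
  proof (cases M)
    case Nil
    show ?thesis
    proof (cases "special n s")
      case True
      then show ?thesis using Nil
        by (simp add: insertion_bound_def free_slots_Nil placements_no_slots ext_weight_nonneg[OF U])
    next
      case False
      have "(1/2)^L \<le> ext_weight n U s L []"
        using Suc.IH[of "[]" s] False by (simp add: insertion_bound_def free_slots_Nil placements_one_slot)
      with ext_weight_step_loop[OF U False, of L "[]"] show ?thesis
        using Nil False by (simp add: insertion_bound_def free_slots_Nil placements_one_slot)
    qed
  next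
    case (Cons m M')
    have m: "m \<in> {1,2}" and M': "set M' \<subseteq> {1,2}" "length M' \<le> L"
      using Suc.prems Cons by auto
    show ?thesis unfolding Cons
      using Suc.IH[OF M'] Suc.IH[of "m # M'" s] Suc.prems(1) Cons
      by (intro insertion_bound_Cons_step[OF U m M'(2)]) auto
  qed
qed

(* The states form a cycle 1, ..., n, n', ..., 1' of length 2n; pos gives the position on
   this cycle.  A continuing link moves one step forward, a switching link reflects
   the position. *)
definition pos :: "nat \<Rightarrow> state \<Rightarrow> nat" where
  "pos n s = (if snd s then 2*n - fst s else fst s - 1)"

definition special_position :: "nat \<Rightarrow> nat \<Rightarrow> bool" where
  "special_position n x \<longleftrightarrow> x = 0 \<or> x = n - 1 \<or> x = n \<or> x = 2*n - 1"

lemma pos_lt: "s \<in> states n \<Longrightarrow> pos n s < 2*n"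
  by (cases s) (auto simp: states_def pos_def)

lemma pos_inj: "s \<in> states n \<Longrightarrow> t \<in> states n \<Longrightarrow> pos n s = pos n t \<Longrightarrow> s = t"
  by (cases s; cases t) (auto simp: states_def pos_def split: if_splits)

lemma special_iff_position: "s \<in> states n \<Longrightarrow> special n s \<longleftrightarrow> special_position n (pos n s)"
  by (cases s) (auto simp: states_def pos_def special_position_def special_def)

lemma pos_continue: "s \<in> states n \<Longrightarrow> pos n (nxt n s 1) = (pos n s + 1) mod (2*n)"
  by (cases s) (auto simp: states_def pos_def nxt_def Let_def mod_if)

lemma pos_switch: "n \<ge> 2 \<Longrightarrow> s \<in> states n \<Longrightarrow> pos n (nxt n s 2) = (4*n - 2 - pos n s) mod (2*n)"
  by (cases s) (auto simp: states_def pos_def nxt_def Let_def mod_if)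

lemma pos_after_continues:
  "s \<in> states n \<Longrightarrow> pos n (last (path n s (replicate r 1))) = (pos n s + r) mod (2*n)"
proof (induction r arbitrary: s)
  case 0
  then show ?case using pos_lt[OF 0] by simp
next
  case (Suc r)
  then show ?case
    using Suc.IH[OF nxt_states[OF Suc.prems]] pos_continue[OF Suc.prems]
    by (simp add: mod_add_left_eq)
qed

definition special_visits :: "nat \<Rightarrow> state \<Rightarrow> nat list \<Rightarrow> nat" where
  "special_visits n s M = length (filter (special n) (path n s M))"

lemma free_slots_plus_special_visits: "free_slots n s M + special_visits n s M = Suc (length M)"
  unfolding free_slots_def special_visits_def
  using sum_length_filter_compl[of "special n" "path n s M"] by simp

lemma special_visits_append:
  "special_visits n s (xs @ l # ys) = special_visits n s xs + special_visits n (nxt n (last (path n s xs)) l) ys"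
proof -
  have "path n s (xs @ l # ys) = path n s xs @ path n (nxt n (last (path n s xs)) l) ys"
    by (induction xs arbitrary: s) auto
  then show ?thesis unfolding special_visits_def by simp
qed

lemma special_visits_continues: "s \<in> states n \<Longrightarrow>
   special_visits n s (replicate r 1)
     = (\<Sum>i<Suc r. if special_position n ((pos n s + i) mod (2*n)) then 1 else 0)"
proof (induction r arbitrary: s)
  case 0
  then show ?case using pos_lt[OF 0] special_iff_position[OF 0] by (simp add: special_visits_def)
next
  case (Suc r)
  have "special_visits n s (replicate (Suc r) 1)
      = (if special n s then 1 else 0) + special_visits n (nxt n s 1) (replicate r 1)"
    by (simp add: special_visits_def)
  also have "\<dots> = (if special_position n ((pos n s + 0) mod (2*n)) then 1 else 0)
     + (\<Sum>i<Suc r. if special_position n ((pos n s + Suc i) mod (2*n)) then 1 else 0)"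
    using Suc.IH[OF nxt_states[OF Suc.prems]] pos_continue[OF Suc.prems]
      special_iff_position[OF Suc.prems] pos_lt[OF Suc.prems]
    by (simp add: mod_add_left_eq)
  also have "\<dots> = (\<Sum>i<Suc (Suc r). if special_position n ((pos n s + i) mod (2*n)) then 1 else 0)"
    by (simp only: sum.lessThan_Suc_shift)
  finally show ?case .
qed

lemma shift_mod_inj:
  fixes N :: nat
  assumes "i < N" "k < N" "(x + i) mod N = (x + k) mod N" shows "i = k"
proof -
  have ordered: "i' = k'" if "i' \<le> k'" "k' < N" "(x + i') mod N = (x + k') mod N" for i' k'
  proof -
    have "N dvd k' - i'" using that mod_eq_dvd_iff_nat[of "x + i'" "x + k'" N] by simp
    moreover have "k' - i' < N" using that by linarith
    ultimately have "k' - i' = 0" using nat_dvd_not_less by blast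
    then show ?thesis using that(1) by simp
  qed
  show ?thesis using ordered[of i k] ordered[of k i] assms by linarith
qed

lemma special_in_window:
  assumes "m \<le> 2*n"
  shows "(\<Sum>i<m. if special_position n ((x + i) mod (2*n)) then 1 else 0) \<le> (4::nat)"
proof -
  define I where "I = {i\<in>{..<m}. special_position n ((x + i) mod (2*n))}"
  have "inj_on (\<lambda>i. (x + i) mod (2*n)) I"
  proof (rule inj_onI)
    fix i k assume "i \<in> I" "k \<in> I" "(x + i) mod (2*n) = (x + k) mod (2*n)"
    then show "i = k" using assms shift_mod_inj[of i "2*n" k x] by (auto simp: I_def)
  qed
  then have "card I = card ((\<lambda>i. (x + i) mod (2*n)) ` I)" by (rule card_image[symmetric])
  also have "\<dots> \<le> card {0, n - 1, n, 2*n - 1}"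
    by (rule card_mono) (auto simp: I_def special_position_def)
  also have "\<dots> \<le> 4" by (simp add: card_insert_if)
  finally show ?thesis by (simp add: sum.If_cases Int_def I_def)
qed

lemma special_in_double_window:
  assumes "m \<le> 4*n"
  shows "(\<Sum>i<m. if special_position n ((x + i) mod (2*n)) then 1 else 0) \<le> (8::nat)"
proof (cases "m \<le> 2*n")
  case True
  then show ?thesis using special_in_window[OF True, of x] by simp
next
  case False
  define f where "f = (\<lambda>i. if special_position n ((x + i) mod (2*n)) then 1 else (0::nat))"
  have "{..<m} = {..<2*n} \<union> {2*n..<m}" using False by auto
  then have "(\<Sum>i<m. f i) = (\<Sum>i<2*n. f i) + (\<Sum>i\<in>{2*n..<m}. f i)"
    by (simp add: sum.union_disjoint ivl_disj_int)
  also have "(\<Sum>i\<in>{2*n..<m}. f i) = (\<Sum>i<m - 2*n. f (i + 2*n))"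
    using False by (simp add: sum.atLeastLessThan_shift_0[of f "2*n" m] atLeast0LessThan add.commute)
  also have "(\<Sum>i<m - 2*n. f (i + 2*n)) = (\<Sum>i<m - 2*n. f i)"
    unfolding f_def by (simp add: add.assoc[symmetric])
  moreover have "m - 2*n \<le> 2*n" using assms by simp
  ultimately show ?thesis
    using special_in_window[of "2*n" n x] special_in_window[of "m - 2*n" n x]
    unfolding f_def by simp
qed

definition skeleton :: "nat \<Rightarrow> nat \<Rightarrow> nat list" where
  "skeleton j K = replicate j 1 @ 2 # replicate (K - 1 - j) 1"

lemma length_skeleton: "j < K \<Longrightarrow> length (skeleton j K) = K"
  by (simp add: skeleton_def)

lemma set_skeleton: "set (skeleton j K) \<subseteq> {1,2}"
  by (auto simp: skeleton_def)

lemma path_weight_skeleton: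
  "j < K \<Longrightarrow> path_weight U (skeleton j K) = edge_prob U 1 ^ (K - 1) * edge_prob U 2"
proof -
  assume "j < K"
  then have "j + (K - 1 - j) = K - 1" by simp
  then show ?thesis
    by (simp add: skeleton_def power_add[symmetric] mult.assoc mult.commute[of "edge_prob U 2"])
qed

(* The end position of a skeleton: advance by j, reflect, advance by K-1-j. *)
lemma pos_after_skeleton:
  assumes "n \<ge> 2" "s \<in> states n"
  shows "pos n (last (path n s (skeleton j K)))
           = ((4*n - 2 - (pos n s + j) mod (2*n)) mod (2*n) + (K - 1 - j)) mod (2*n)"
proof -
  define s1 where "s1 = last (path n s (replicate j 1))"
  have s1: "s1 \<in> states n" unfolding s1_def using assms(2) by (rule last_path_states)
  have "last (path n s (skeleton j K)) = last (path n (nxt n s1 2) (replicate (K - 1 - j) 1))"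
    unfolding skeleton_def s1_def by (simp add: last_path_append)
  then show ?thesis
    using pos_after_continues[OF nxt_states[OF s1]] pos_switch[OF assms(1) s1]
      pos_after_continues[OF assms(2), of j]
    by (simp add: s1_def)
qed

lemma special_visits_skeleton:
  assumes "n \<ge> 2" "s \<in> states n" "j < 2*n" "K - j \<le> 4*n"
  shows "special_visits n s (skeleton j K) \<le> 12"
proof -
  define s1 where "s1 = last (path n s (replicate j 1))"
  have s2: "nxt n s1 2 \<in> states n"
    unfolding s1_def using assms(2) by (intro nxt_states last_path_states)
  have "special_visits n s (skeleton j K)
      = special_visits n s (replicate j 1) + special_visits n (nxt n s1 2) (replicate (K - 1 - j) 1)"
    unfolding skeleton_def s1_def by (rule special_visits_append)
  moreover have "special_visits n s (replicate j 1) \<le> 4"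
    unfolding special_visits_continues[OF assms(2)] using assms by (intro special_in_window) auto
  moreover have "special_visits n (nxt n s1 2) (replicate (K - 1 - j) 1) \<le> 8"
    unfolding special_visits_continues[OF s2] using assms by (intro special_in_double_window) auto
  ultimately show ?thesis by simp
qed

lemma free_slots_skeleton:
  assumes "n \<ge> 2" "s \<in> states n" "j < 2*n" "K - j \<le> 4*n" "j < K"
  shows "Suc K \<le> free_slots n s (skeleton j K) + 12"
  using special_visits_skeleton[OF assms(1-4)] free_slots_plus_special_visits[of n s "skeleton j K"]
    length_skeleton[OF assms(5)]
  by simp

lemma free_slots_suffix:
  "free_slots n (nxt n (last (path n s xs)) l) ys \<le> free_slots n s (xs @ l # ys)"
  using free_slots_plus_special_visits[of n s "xs @ l # ys"]
    free_slots_plus_special_visits[of n "nxt n (last (path n s xs)) l" ys]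
    special_visits_append[of n s xs l ys]
    free_slots_plus_special_visits[of n s xs]
  by simp

(* For n >= 3 no three consecutive positions are all special; this is what gives at
   least one free slot when n = 3, where the bound K - 11 is useless. *)
lemma no_three_special_in_a_row:
  assumes "n \<ge> 3" "p < 2*n"
  shows "\<not> (special_position n p \<and> special_position n ((p + 1) mod (2*n))
            \<and> special_position n ((p + 2) mod (2*n)))"
  using assms unfolding special_position_def by (auto simp: mod_if)

lemma free_slot_after_switch:
  assumes n: "n \<ge> 3" and s: "s \<in> states n" and K: "j + 3 \<le> K"
  shows "1 \<le> free_slots n s (skeleton j K)"
proof -
  define t where "t = nxt n (last (path n s (replicate j 1))) 2"
  have t: "t \<in> states n" unfolding t_def using s by (intro nxt_states last_path_states)
  have t1: "nxt n t 1 \<in> states n" and t2: "nxt n (nxt n t 1) 1 \<in> states n"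
    using t by (auto intro: nxt_states)
  obtain r where r: "K - 1 - j = Suc (Suc r)" using K by (intro that[of "K - 3 - j"]) simp
  have "(if special n t then 0 else 1) + (if special n (nxt n t 1) then 0 else 1)
          + (if special n (nxt n (nxt n t 1) 1) then 0 else 1)
        \<le> free_slots n t (replicate (K - 1 - j) 1)"
    unfolding r by (cases r) (auto simp: free_slots_Cons free_slots_Nil)
  also have "\<dots> \<le> free_slots n s (skeleton j K)"
    unfolding skeleton_def t_def by (rule free_slots_suffix)
  finally have slots: "(if special n t then 0 else 1) + (if special n (nxt n t 1) then 0 else 1)
          + (if special n (nxt n (nxt n t 1) 1) then 0 else 1) \<le> free_slots n s (skeleton j K)" .
  have "pos n (nxt n (nxt n t 1) 1) = (pos n t + 2) mod (2*n)"
    using pos_continue[OF t] pos_continue[OF t1] by (simp add: mod_Suc_eq)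
  then have "\<not> (special n t \<and> special n (nxt n t 1) \<and> special n (nxt n (nxt n t 1) 1))"
    using no_three_special_in_a_row[OF n pos_lt[OF t]] pos_continue[OF t]
      special_iff_position[OF t] special_iff_position[OF t1] special_iff_position[OF t2]
    by simp
  then show ?thesis using slots by (auto split: if_splits)
qed

(* The number of continuing links taken before the switch, chosen so that the skeleton of
   length K from position x ends at position y.  This requires K + x + y to be odd. *)
definition switch_time :: "nat \<Rightarrow> nat \<Rightarrow> nat \<Rightarrow> nat \<Rightarrow> nat" where
  "switch_time n x y K = ((K + 4*n - 3 - x - y) div 2) mod n"

(* The chosen switch time reaches the target: x + j, reflected to 4n-2-x-j, plus K-1-j
   is congruent to y modulo 2n since 2j = K + 4n - 3 - x - y (mod 2n). *)
lemma switch_time_reaches_target: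
  fixes n x y K :: nat
  assumes n: "n \<ge> 1" and x: "x < 2*n" and y: "y < 2*n" and K: "K \<ge> n"
    and even: "even (K + 4*n - 3 - x - y)"
  defines "j \<equiv> switch_time n x y K"
  shows "((4*n - 2 - (x + j) mod (2*n)) mod (2*n) + (K - 1 - j)) mod (2*n) = y"
proof -
  define D where "D = K + 4*n - 3 - x - y"
  have jn: "j < n" using n unfolding j_def switch_time_def by simp
  have j2: "2 * j = D mod (2*n)"
    using even unfolding j_def switch_time_def D_def[symmetric] by (metis dvd_mult_div_cancel mult_mod_right)
  define r where "r = (x + j) mod (2*n)"
  have r: "int r = (int x + int j) mod (2 * int n)" unfolding r_def by (simp add: zmod_int)
  have r2: "int (4*n - 2 - r) = 4 * int n - 2 - int r"
    using n mod_less_divisor[of "2*n" "x + j"] unfolding r_def by linarith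
  have k: "int (K - 1 - j) = int K - 1 - int j" using jn K by linarith
  have "int (((4*n - 2 - r) mod (2*n) + (K - 1 - j)) mod (2*n))
      = (int (4*n - 2 - r) mod (2 * int n) + int (K - 1 - j)) mod (2 * int n)"
    by (simp add: zmod_int)
  also have "\<dots> = ((4 * int n - 2 - (int x + int j) mod (2 * int n)) mod (2 * int n)
                      + (int K - 1 - int j)) mod (2 * int n)"
    by (simp only: r2 k r)
  also have "\<dots> = (4 * int n - 2 - (int x + int j) + (int K - 1 - int j)) mod (2 * int n)"
    by (simp add: mod_add_left_eq mod_diff_right_eq)
  also have "\<dots> = (int y + 2 * int n * (int D div (2 * int n))) mod (2 * int n)"
  proof -
    have "int (2*j) = int D mod (2 * int n)" using j2 by (simp add: zmod_int)
    then have "2 * int j = int D - 2 * int n * (int D div (2 * int n))"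
      by (simp add: minus_div_mult_eq_mod [symmetric] algebra_simps)
    moreover have "int D = int K + 4 * int n - 3 - int x - int y" unfolding D_def using x y K n by linarith
    ultimately show ?thesis by simp
  qed
  also have "\<dots> = int y" using y by simp
  finally show ?thesis unfolding r_def by linarith
qed

definition route :: "nat \<Rightarrow> state \<Rightarrow> state \<Rightarrow> nat \<Rightarrow> nat list" where
  "route n a b Z = skeleton (switch_time n (pos n a) (pos n b) (4*n - 1 - Z)) (4*n - 1 - Z)"

lemma route_facts:
  assumes n: "n \<ge> 3" and a: "a \<in> states n" and b: "b \<in> states n"
    and Z: "Z + n \<le> 4*n - 1" and even: "even (Z + pos n a + pos n b)"
  shows "length (route n a b Z) = 4*n - 1 - Z" and "set (route n a b Z) \<subseteq> {1,2}"
    and "last (path n a (route n a b Z)) = b"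
    and "switch_time n (pos n a) (pos n b) (4*n - 1 - Z) < n"
proof -
  define x where "x = pos n a"
  define y where "y = pos n b"
  define K where "K = 4*n - 1 - Z"
  define j where "j = switch_time n x y K"
  have x: "x < 2*n" unfolding x_def using pos_lt[OF a] .
  have y: "y < 2*n" unfolding y_def using pos_lt[OF b] .
  have K: "K \<ge> n" unfolding K_def using Z by simp
  have j: "j < n" unfolding j_def switch_time_def using n by simp
  then show "switch_time n (pos n a) (pos n b) (4*n - 1 - Z) < n"
    unfolding j_def x_def y_def K_def .
  show "length (route n a b Z) = 4*n - 1 - Z"
    using length_skeleton[of j K] j K unfolding route_def j_def x_def y_def K_def by simp
  show "set (route n a b Z) \<subseteq> {1,2}" unfolding route_def by (rule set_skeleton)
  have sum: "(K + 4*n - 3 - x - y) + (Z + x + y) = 2 * (4*n - 2)" unfolding K_def using Z x y n by simp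
  have "even (Z + x + y)" using even unfolding x_def y_def .
  then have "even (K + 4*n - 3 - x - y)" using sum by (metis even_add dvd_triv_left)
  then have "pos n (last (path n a (route n a b Z))) = y"
    using pos_after_skeleton[of n a] switch_time_reaches_target[of n x y K] n a x y K
    unfolding route_def j_def x_def y_def K_def by simp
  then show "last (path n a (route n a b Z)) = b"
    using pos_inj[OF last_path_states[OF a] b] unfolding y_def by simp
qed

lemma lower_half_binomial_sum: "2 * (\<Sum>Z\<le>h. (2*h+1) choose Z) = (2::nat)^(2*h+1)"
proof -
  define N where "N = 2*h+1"
  have "(\<Sum>k\<in>{Suc h..N}. N choose k) = (\<Sum>Z\<le>h. N choose (N - Z))"
  proof (rule sum.reindex_bij_witness[of _ "\<lambda>Z. N - Z" "\<lambda>k. N - k"])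
  qed (auto simp: N_def)
  also have "\<dots> = (\<Sum>Z\<le>h. N choose Z)"
    by (rule sum.cong) (auto simp: N_def binomial_symmetric[symmetric])
  finally have upper: "(\<Sum>k\<in>{Suc h..N}. N choose k) = (\<Sum>Z\<le>h. N choose Z)" .
  have "{..N} = {..h} \<union> {Suc h..N}" unfolding N_def by auto
  then have "(2::nat)^N = (\<Sum>Z\<le>h. N choose Z) + (\<Sum>k\<in>{Suc h..N}. N choose k)"
    by (simp add: choose_row_sum[symmetric] sum.union_disjoint)
  then show ?thesis using upper unfolding N_def by simp
qed

(* Restricting to Z of a fixed parity (and allowing Z = h+1) still keeps a quarter of the
   row sum, since the binomial coefficients increase up to the middle of the row. *)
lemma parity_binomial_sum:
  "2^(2*h+1) \<le> 4 * (\<Sum>Z\<in>{Z. Z \<le> Suc h \<and> even (Z + p)}. (2*h+1) choose Z)"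
proof -
  define N where "N = 2*h+1"
  define A where "A = {Z. Z \<le> Suc h \<and> even (Z + p)}"
  define B0 where "B0 = {Z. Z \<le> h \<and> even (Z + p)}"
  define B1 where "B1 = {Z. Z \<le> h \<and> odd (Z + p)}"
  have fin: "finite A" "finite B0" "finite B1" unfolding A_def B0_def B1_def by auto
  have up: "N choose Z \<le> N choose (Suc Z)" if "Z \<le> h" for Z
  proof (cases "Z = h")
    case True
    have "N choose Suc (N div 2) = N choose (N div 2)" by (rule central_binomial_odd) (simp add: N_def)
    then show ?thesis using True by (simp add: N_def)
  next
    case False
    then show ?thesis using that by (intro binomial_mono) (auto simp: N_def)
  qed
  have S0: "(\<Sum>Z\<in>B0. N choose Z) \<le> (\<Sum>Z\<in>A. N choose Z)"
    using fin by (intro sum_mono2) (auto simp: A_def B0_def)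
  have "(\<Sum>Z\<in>B1. N choose Z) \<le> (\<Sum>Z\<in>B1. N choose (Suc Z))"
    by (rule sum_mono) (auto simp: B1_def intro: up)
  also have "\<dots> = (\<Sum>Z\<in>Suc ` B1. N choose Z)" by (simp add: sum.reindex)
  also have "\<dots> \<le> (\<Sum>Z\<in>A. N choose Z)"
    using fin by (intro sum_mono2) (auto simp: A_def B1_def)
  finally have S1: "(\<Sum>Z\<in>B1. N choose Z) \<le> (\<Sum>Z\<in>A. N choose Z)" .
  have "{..h} = B0 \<union> B1" "B0 \<inter> B1 = {}" unfolding B0_def B1_def by auto
  then have "(\<Sum>Z\<le>h. N choose Z) = (\<Sum>Z\<in>B0. N choose Z) + (\<Sum>Z\<in>B1. N choose Z)"
    using fin by (simp add: sum.union_disjoint)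
  then show ?thesis
    using S0 S1 lower_half_binomial_sum[of h] unfolding A_def N_def by linarith
qed

lemma finite_T_event: "finite (T_event n a b)"
proof -
  have "T_event n a b \<subseteq> {ls. set ls \<subseteq> {0,1,2} \<and> length ls = 4*n-1}"
    by (auto simp: T_event_def)
  moreover have "finite {ls. set ls \<subseteq> ({0,1,2}::nat set) \<and> length ls = 4*n-1}"
    by (rule finite_lists_length_eq) simp
  ultimately show ?thesis by (rule finite_subset)
qed

lemma sum_route_weights_le_prob_T:
  assumes n: "n \<ge> 3" and U: "U \<ge> 1" and a: "a \<in> states n" and b: "b \<in> states n"
    and fin: "finite Zs"
    and Zs: "\<And>Z. Z \<in> Zs \<Longrightarrow> Z + n \<le> 4*n - 1 \<and> even (Z + pos n a + pos n b)"
  shows "(\<Sum>Z\<in>Zs. ext_weight n U a (4*n-1) (route n a b Z)) \<le> prob_T n U a b"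
proof -
  let ?ext = "\<lambda>Z. loop_ext n a (4*n-1) (route n a b Z)"
  have sub: "(\<Union>Z\<in>Zs. ?ext Z) \<subseteq> T_event n a b"
  proof
    fix ls assume "ls \<in> (\<Union>Z\<in>Zs. ?ext Z)"
    then obtain Z where Z: "Z \<in> Zs" and ls: "ls \<in> ?ext Z" by blast
    have "last (path n a ls) = last (path n a (route n a b Z))"
      using ls last_path_without_loops[of n a ls] by (simp add: loop_ext_def)
    also have "\<dots> = b" using route_facts(3)[OF n a b] Zs[OF Z] by blast
    finally show "ls \<in> T_event n a b" using ls by (simp add: loop_ext_def T_event_def)
  qed
  have disj: "?ext Z \<inter> ?ext Z' = {}" if "Z \<in> Zs" "Z' \<in> Zs" "Z \<noteq> Z'" for Z Z'
  proof -
    have "length (route n a b Z) \<noteq> length (route n a b Z')"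
      using route_facts(1)[OF n a b] Zs[OF that(1)] Zs[OF that(2)] that(3) by auto
    then show ?thesis by (auto simp: loop_ext_def)
  qed
  have "(\<Sum>Z\<in>Zs. ext_weight n U a (4*n-1) (route n a b Z)) = (\<Sum>ls\<in>(\<Union>Z\<in>Zs. ?ext Z). path_weight U ls)"
    unfolding ext_weight_def using fin disj
    by (intro sum.UNION_disjoint[symmetric]) (auto simp: finite_loop_ext)
  also have "\<dots> \<le> prob_T n U a b"
    unfolding prob_T_def using sub finite_T_event
    by (intro sum_mono2) (auto intro: path_weight_nonneg[OF U])
  finally show ?thesis .
qed

lemma route_weight_bound:
  assumes n: "n \<ge> 3" and U: "U \<ge> 1" and a: "a \<in> states n" and b: "b \<in> states n"
    and Z: "Z + n \<le> 4*n - 1" and even: "even (Z + pos n a + pos n b)"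
  shows "real (placements (free_slots n a (route n a b Z)) Z)
           * ((1/2)^(4*n-1) * (1 - 1/real U)^(4*n-1) / real U)
         \<le> ext_weight n U a (4*n-1) (route n a b Z)"
proof -
  define K where "K = 4*n - 1 - Z"
  define q where "q = real (placements (free_slots n a (route n a b Z)) Z)"
  have K: "K \<le> 4*n-1" "4*n - 1 - K = Z" "K \<ge> 1" unfolding K_def using Z n by auto
  have insertion: "path_weight U (route n a b Z) * (1/2)^Z * q \<le> ext_weight n U a (4*n-1) (route n a b Z)"
    using loop_insertion_bound[OF U route_facts(2)[OF n a b Z even], of "4*n-1"]
      route_facts(1)[OF n a b Z even] K
    unfolding q_def K_def insertion_bound_def by simp
  have "switch_time n (pos n a) (pos n b) K < K"
    using route_facts(4)[OF n a b Z even] Z unfolding K_def by simp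
  then have weight: "path_weight U (route n a b Z) = ((1 - 1/real U)/2)^(K-1) * (1/(2*real U))"
    unfolding route_def K_def[symmetric] by (subst path_weight_skeleton) (simp_all add: edge_prob_def)
  have "(1 - 1/real U)^(4*n-1) \<le> (1 - 1/real U)^(K-1)"
    using U K by (intro power_decreasing) auto
  then have "q * ((1/2)^(4*n-1) * (1 - 1/real U)^(4*n-1) / real U)
      \<le> q * ((1/2)^(4*n-1) * (1 - 1/real U)^(K-1) / real U)"
    using U unfolding q_def by (intro mult_left_mono divide_right_mono) auto
  also have "\<dots> = path_weight U (route n a b Z) * (1/2)^Z * q"
  proof -
    have "Z + (K - 1) + 1 = 4*n-1" using K by simp
    then have "(1/2::real)^(4*n-1) = (1/2)^Z * (1/2)^(K-1) * (1/2)"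
      by (metis power_add power_one_right)
    then show ?thesis unfolding weight by (simp add: power_divide field_simps)
  qed
  also have "\<dots> \<le> ext_weight n U a (4*n-1) (route n a b Z)" by (rule insertion)
  finally show ?thesis unfolding q_def .
qed

(* For Z <= 2n-6 a route has at least 4n-12-Z free slots (n >= 4), resp. at least one
   free slot (n = 3); either way its placements dominate a binomial coefficient of the
   odd row 2(2n-7)+1. *)
lemma route_placements_bound:
  assumes n: "n \<ge> 3" and a: "a \<in> states n" and b: "b \<in> states n"
    and Z: "Z \<le> Suc (2*n - 7)" and even: "even (Z + pos n a + pos n b)"
  shows "(2*(2*n - 7) + 1) choose Z \<le> placements (free_slots n a (route n a b Z)) Z"
proof -
  define K where "K = 4*n - 1 - Z"
  define j where "j = switch_time n (pos n a) (pos n b) K"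
  define q where "q = free_slots n a (route n a b Z)"
  have Zn: "Z + n \<le> 4*n - 1" using Z n by simp
  have j: "j < n" using route_facts(4)[OF n a b Zn even] unfolding j_def K_def .
  have route: "route n a b Z = skeleton j K" unfolding route_def j_def K_def ..
  show ?thesis
  proof (cases "n = 3")
    case True
    then have "1 \<le> q"
      unfolding q_def route using free_slot_after_switch[OF n a] j Z by (simp add: K_def)
    then show ?thesis using True Z placements_pos[of q Z] unfolding q_def
      by (cases Z) auto
  next
    case False
    then have "Suc K \<le> q + 12"
      unfolding q_def route using free_slots_skeleton[OF _ a] n j Z by (simp add: K_def)
    then have "2*(2*n - 7) + 1 \<le> Z + q - 1" using False n Z unfolding K_def by simp
    then show ?thesis unfolding q_def by (rule placements_ge_binomial)
  qed
qed

(* The row 2(2n-7)+1 of binomial coefficients is at most 12 shorter than the 4n-1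
   transitions, so its row sum compensates all but a constant factor of 2^-(4n-1). *)
lemma binomial_row_vs_path_length:
  assumes n: "n \<ge> 3"
  shows "(1/2::real)^14 \<le> 2^(2*(2*n - 7)+1) / 4 * (1/2)^(4*n-1)"
proof -
  define e where "e = 4*n - 2 - 2*(2*n - 7)"
  have e: "4*n - 1 = (2*(2*n - 7)+1) + e" "e + 2 \<le> 14" unfolding e_def using n by auto
  have "(1/2::real)^14 \<le> (1/2)^(e+2)" using e(2) by (intro power_decreasing) auto
  also have "\<dots> = 2^(2*(2*n - 7)+1) / 4 * (1/2)^(4*n-1)"
    unfolding e(1) by (simp add: power_add power_divide field_simps)
  finally show ?thesis .
qed

lemma prob_T_lower_bound:
  assumes n: "n \<ge> 3" and U: "U \<ge> 1" and a: "a \<in> states n" and b: "b \<in> states n"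
  shows "(1/2)^14 * (1 - 1/real U)^(4*n-1) / real U \<le> prob_T n U a b"
proof -
  define h where "h = 2*n - 7"
  define \<rho> where "\<rho> = (1/2::real)^(4*n-1) * (1 - 1/real U)^(4*n-1) / real U"
  define Zs where "Zs = {Z. Z \<le> Suc h \<and> even (Z + (pos n a + pos n b))}"
  have \<rho>: "\<rho> \<ge> 0" unfolding \<rho>_def using U by auto
  have fin: "finite Zs" unfolding Zs_def by simp
  have Zs: "Z + n \<le> 4*n - 1 \<and> even (Z + pos n a + pos n b)" if "Z \<in> Zs" for Z
    using that n unfolding Zs_def h_def by (auto simp: add.assoc)
  have "real ((2::nat)^(2*h+1)) \<le> real (4 * (\<Sum>Z\<in>Zs. (2*h+1) choose Z))"
    unfolding Zs_def of_nat_le_iff by (rule parity_binomial_sum)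
  then have "2^(2*h+1) / 4 * \<rho> \<le> (\<Sum>Z\<in>Zs. real ((2*h+1) choose Z)) * \<rho>"
    using \<rho> by (intro mult_right_mono) auto
  also have "\<dots> \<le> (\<Sum>Z\<in>Zs. real (placements (free_slots n a (route n a b Z)) Z) * \<rho>)"
    unfolding sum_distrib_right using \<rho> route_placements_bound[OF n a b]
    by (intro sum_mono mult_right_mono) (auto simp: Zs_def h_def add.assoc)
  also have "\<dots> \<le> (\<Sum>Z\<in>Zs. ext_weight n U a (4*n-1) (route n a b Z))"
    unfolding \<rho>_def using Zs by (intro sum_mono route_weight_bound[OF n U a b]) auto
  also have "\<dots> \<le> prob_T n U a b" by (rule sum_route_weights_le_prob_T[OF n U a b fin Zs])
  finally have main: "2^(2*h+1) / 4 * \<rho> \<le> prob_T n U a b" .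
  have "(1/2::real)^14 \<le> 2^(2*h+1) / 4 * (1/2)^(4*n-1)"
    unfolding h_def using n by (rule binomial_row_vs_path_length)
  moreover have "(1 - 1/real U)^(4*n-1) / real U \<ge> 0" using U by simp
  ultimately have "(1/2)^14 * ((1 - 1/real U)^(4*n-1) / real U)
      \<le> 2^(2*h+1) / 4 * (1/2)^(4*n-1) * ((1 - 1/real U)^(4*n-1) / real U)"
    by (rule mult_right_mono)
  with main show ?thesis unfolding \<rho>_def by (simp add: mult.assoc)
qed

lemma continuing_power_bound:
  fixes c :: real
  assumes U: "U \<ge> 3" and c: "real n \<le> c * real U"
  shows "exp (-8*c) \<le> (1 - 1/real U)^(4*n-1)"
proof -
  define x where "x = 1/real U"
  have x: "0 \<le> x" "x \<le> 1/2" unfolding x_def using U by auto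
  have "- x - 2 * x^2 \<le> ln (1 - x)" using ln_one_minus_pos_lower_bound[OF x] .
  moreover have "2 * x^2 \<le> x" using mult_left_mono[of "2*x" 1 x] x by (simp add: power2_eq_square mult_ac)
  ultimately have ln: "-2*x \<le> ln (1 - x)" by linarith
  have "real (4*n-1) * (2*x) \<le> 4 * real n * (2*x)" using x by (intro mult_right_mono) auto
  also have "\<dots> = 8 * (real n / real U)" unfolding x_def by simp
  also have "\<dots> \<le> 8 * c" using c U by (simp add: divide_le_eq)
  finally have "-8*c \<le> real (4*n-1) * (-2*x)" by linarith
  also have "\<dots> \<le> real (4*n-1) * ln (1 - x)" using ln by (intro mult_left_mono) auto
  finally have "exp (-8*c) \<le> exp (real (4*n-1) * ln (1 - x))" by simp
  also have "\<dots> = (1 - x)^(4*n-1)" using x by (simp add: exp_of_nat_mult exp_ln)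
  finally show ?thesis unfolding x_def .
qed

theorem lemma11:
  fixes c :: real
  assumes "c \<ge> 1"
  shows "\<exists>c''>0. \<forall>n U :: nat. \<forall>a b.
           3 \<le> n \<longrightarrow> 3 \<le> U \<longrightarrow> real n / c \<le> real U \<longrightarrow> real U \<le> c * real n \<longrightarrow>
           a \<in> states n \<longrightarrow> b \<in> states n \<longrightarrow>
           prob_T n U a b \<ge> 1 / (c'' * real n)"
proof (intro exI[of _ "2^14 * exp (8*c) * c"] conjI allI impI)
  show "0 < (2::real)^14 * exp (8*c) * c" using assms by simp
  fix n U :: nat and a b
  assume n: "3 \<le> n" and U: "3 \<le> U" and lower: "real n / c \<le> real U" and upper: "real U \<le> c * real n"
    and a: "a \<in> states n" and b: "b \<in> states n"
  have c: "c > 0" using assms by simp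
  have "real n \<le> c * real U" using lower c by (simp add: divide_le_eq mult.commute)
  then have power: "exp (-8*c) \<le> (1 - 1/real U)^(4*n-1)" by (rule continuing_power_bound[OF U])
  have "1 / ((2::real)^14 * exp (8*c) * c * real n) = (1/2)^14 * exp (-8*c) * (1 / (c * real n))"
    by (simp add: exp_minus field_simps)
  also have "\<dots> \<le> (1/2)^14 * (1 - 1/real U)^(4*n-1) * (1 / real U)"
    using power upper U c by (intro mult_mono divide_left_mono) auto
  also have "\<dots> \<le> prob_T n U a b" using prob_T_lower_bound[OF n _ a b] U by simp
  finally show "1 / ((2::real)^14 * exp (8*c) * c * real n) \<le> prob_T n U a b" .
qed

end
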